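(* Let $T$ be a table and $C_T$ the event-log of Algorithm 2 run on $T$. If a partial witness tree $\tau_S$ occurs in $C_T$, then (1) $\tau_S$ is proper, and (2) $\tau_S$ passes the $T$-check.
   Context: Setting: $\mathcal{P}$ is a finite set of mutually independent discrete random variables with finite domains; $\mathcal{A}$ is a finite set of events determined by them; $\mathrm{vbl}(A)$ is the minimal set of variables determining $A$; the dependency graph joins $A\neq B$ iff $\mathrm{vbl}(A)\cap\mathrm{vbl}(B)\neq\emptyset$; $\Gamma(A)$ is the neighborhood and $\Gamma^+(A)=\Gamma(A)\cup\{A\}$. Binary trees: for each $A\in\mathcal{A}$ a rooted binary tree $\mathbb{B}_A$ is fixed whose vertices are labeled by nonempty subsets of $\mathrm{vbl}(A)$: the root is labeled $\mathrm{vbl}(A)$, leaves are labeled by singletons, and each non-leaf vertex has two children whose labels are disjoint and whose union is its label. $\mathbb{B}_A$ also denotes the set of these labels. Partial witness tree $\tau_S$: a finite rooted tree whose root is labeled by some $S\in\mathbb{B}_A$ for some $A\in\mathcal{A}$, and whose other vertices are labeled by events; each child of the root is labeled by an event $B$ with $\mathrm{vbl}(B)\cap S\ne\emptyset$, and each child of a non-root vertex labeled $B$ is labeled by an element of $\Gamma^+(B)$. The label of a non-root vertex $v$ is written $[v]$. It is proper if the children of every vertex have pairwise distinct labels. Table: $T$ assigns to each variable $p$ a sequence of values $T(p,1),T(p,2),\dots$ in its domain. Algorithm 2 on $T$: set a pointer $t_p=1$ for each $p$; while some event happens under the evaluation $p=T(p,t_p)$ for all $p$, pick one such event $A$ by a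 fixed deterministic rule and increment $t_p$ for every $p\in\mathrm{vbl}(A)$. The event-log $C_T$ is the sequence $C_T(1),C_T(2),\dots$ of events picked in successive iterations. For an event-log $C$, a step $t$ and $S\in\mathbb{B}_{C(t)}$, the tree $\tau_C(t,S)$ is built as follows: start with a single root labeled $S$; for $i=t-1,t-2,\dots,1$: (i) if some non-root vertex $v$ satisfies $C(i)\in\Gamma^+([v])$, choose such a $v$ of maximum distance from the root (ties broken arbitrarily) and attach to it a new child labeled $C(i)$; (ii) otherwise, if $S\cap\mathrm{vbl}(C(i))\ne\emptyset$, attach a new child labeled $C(i)$ to the root; (iii) otherwise do nothing. A partial witness tree $\tau_S$ occurs in $C$ if there is $t$ with $S\in\mathbb{B}_{C(t)}$ and $\tau_S=\tau_C(t,S)$. $T$-check of $\tau_S$: visit the non-root vertices in order of decreasing depth; at a vertex labeled $B$, for each $p\in\mathrm{vbl}(B)$ take the first not-yet-used value of row $p$ of $T$ (row $p$ is consumed in order $T(p,1),T(p,2),\dots$) and check whether $B$ happens under these values. The $T$-check passes if every visited event happens. *)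

theory Defs
  imports Main "HOL-Library.Multiset"
begin

text \<open>An event e is given by its variable set vbl e and the predicate
  hap e f ("e happens under the evaluation f").\<close>

definition determines ::
  "'v set \<Rightarrow> ('v \<Rightarrow> 'val set) \<Rightarrow> ('e \<Rightarrow> ('v \<Rightarrow> 'val) \<Rightarrow> bool) \<Rightarrow> 'e \<Rightarrow> 'v set \<Rightarrow> bool"
  where "determines P D hap A V \<longleftrightarrow>
     (\<forall>f g. (\<forall>p\<in>P. f p \<in> D p) \<longrightarrow> (\<forall>p\<in>P. g p \<in> D p) \<longrightarrow>
        (\<forall>p\<in>V. f p = g p) \<longrightarrow> (hap A f \<longleftrightarrow> hap A g))"

definition setting ::
  "'v set \<Rightarrow> 'e set \<Rightarrow> ('v \<Rightarrow> 'val set) \<Rightarrow> ('e \<Rightarrow> 'v set) \<Rightarrow> ('e \<Rightarrow> ('v \<Rightarrow> 'val) \<Rightarrow> bool) \<Rightarrow> bool"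
  where "setting P Ev D vbl hap \<longleftrightarrow>
     finite P \<and> finite Ev \<and> (\<forall>p\<in>P. finite (D p) \<and> D p \<noteq> {}) \<and>
     (\<forall>A\<in>Ev. vbl A \<subseteq> P \<and> determines P D hap A (vbl A) \<and>
        (\<forall>V. V \<subset> vbl A \<longrightarrow> \<not> determines P D hap A V))"

definition Gamma :: "'e set \<Rightarrow> ('e \<Rightarrow> 'v set) \<Rightarrow> 'e \<Rightarrow> 'e set"
  where "Gamma Ev vbl A = {B \<in> Ev. B \<noteq> A \<and> vbl A \<inter> vbl B \<noteq> {}}"

definition Gamma_plus :: "'e set \<Rightarrow> ('e \<Rightarrow> 'v set) \<Rightarrow> 'e \<Rightarrow> 'e set"
  where "Gamma_plus Ev vbl A = insert A (Gamma Ev vbl A)"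

datatype 'v btree = BLeaf "'v set" | BNode "'v set" "'v btree" "'v btree"

fun blabel :: "'v btree \<Rightarrow> 'v set" where
  "blabel (BLeaf S) = S"
| "blabel (BNode S _ _) = S"

fun blabels :: "'v btree \<Rightarrow> 'v set set" where
  "blabels (BLeaf S) = {S}"
| "blabels (BNode S l r) = insert S (blabels l \<union> blabels r)"

fun bwf :: "'v btree \<Rightarrow> bool" where
  "bwf (BLeaf S) \<longleftrightarrow> (\<exists>p. S = {p})"
| "bwf (BNode S l r) \<longleftrightarrow> bwf l \<and> bwf r \<and> blabel l \<noteq> {} \<and> blabel r \<noteq> {} \<and>
      blabel l \<inter> blabel r = {} \<and> blabel l \<union> blabel r = S"

definition valid_btrees :: "'e set \<Rightarrow> ('e \<Rightarrow> 'v set) \<Rightarrow> ('e \<Rightarrow> 'v btree) \<Rightarrow> bool"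
  where "valid_btrees Ev vbl BT \<longleftrightarrow> (\<forall>A\<in>Ev. bwf (BT A) \<and> blabel (BT A) = vbl A)"

text \<open>Non-root vertices: an event label and a multiset of children (unordered
  rooted trees, i.e. trees up to isomorphism). A partial witness tree is a pair
  (S, children of the root).\<close>

datatype 'e wt = WT (wlab: 'e) (wchildren: "'e wt multiset")

type_synonym ('v, 'e) pwt = "'v set \<times> 'e wt multiset"

primrec verts :: "'e wt \<Rightarrow> (nat \<times> 'e) multiset" where
  "verts (WT A ch) = add_mset (0, A)
      (sum_mset (image_mset (\<lambda>m. image_mset (\<lambda>(d, B). (Suc d, B)) m) (image_mset verts ch)))"

text \<open>(depth, label) for all non-root vertices of a partial witness tree (children of the root have depth 1).\<close>
definition pwt_verts :: "('v, 'e) pwt \<Rightarrow> (nat \<times> 'e) multiset" where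
  "pwt_verts \<tau> = image_mset (\<lambda>(d, B). (Suc d, B)) (sum_mset (image_mset verts (snd \<tau>)))"

primrec wt_ok :: "('e \<Rightarrow> 'e set) \<Rightarrow> 'e wt \<Rightarrow> bool" where
  "wt_ok G (WT A ch) \<longleftrightarrow> (\<forall>c\<in>#ch. wlab c \<in> G A) \<and> (\<forall>b\<in>#image_mset (wt_ok G) ch. b)"

definition is_pwt ::
  "'e set \<Rightarrow> ('e \<Rightarrow> 'v set) \<Rightarrow> ('e \<Rightarrow> 'v btree) \<Rightarrow> ('v, 'e) pwt \<Rightarrow> bool"
  where "is_pwt Ev vbl BT \<tau> \<longleftrightarrow>
     (\<exists>A\<in>Ev. fst \<tau> \<in> blabels (BT A)) \<and>
     (\<forall>c\<in>#snd \<tau>. wlab c \<in> Ev \<and> vbl (wlab c) \<inter> fst \<tau> \<noteq> {}) \<and>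
     (\<forall>c\<in>#snd \<tau>. wt_ok (Gamma_plus Ev vbl) c)"

definition distinct_labels :: "'e wt multiset \<Rightarrow> bool" where
  "distinct_labels ch \<longleftrightarrow> (\<forall>B. count (image_mset wlab ch) B \<le> 1)"

primrec wt_proper :: "'e wt \<Rightarrow> bool" where
  "wt_proper (WT A ch) \<longleftrightarrow> distinct_labels ch \<and> (\<forall>b\<in>#image_mset wt_proper ch. b)"

definition proper :: "('v, 'e) pwt \<Rightarrow> bool" where
  "proper \<tau> \<longleftrightarrow> distinct_labels (snd \<tau>) \<and> (\<forall>c\<in>#snd \<tau>. wt_proper c)"

text \<open>Table: T p i is the i-th entry (i \<ge> 1) of row p.\<close>
definition valid_table :: "'v set \<Rightarrow> ('v \<Rightarrow> 'val set) \<Rightarrow> ('v \<Rightarrow> nat \<Rightarrow> 'val) \<Rightarrow> bool"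
  where "valid_table P D T \<longleftrightarrow> (\<forall>p\<in>P. \<forall>i\<ge>1. T p i \<in> D p)"

text \<open>Current evaluation after the events hs have been picked: pointer
  t_p = 1 + number of picked events containing p.\<close>
definition cur_eval :: "('e \<Rightarrow> 'v set) \<Rightarrow> ('v \<Rightarrow> nat \<Rightarrow> 'val) \<Rightarrow> 'e list \<Rightarrow> 'v \<Rightarrow> 'val"
  where "cur_eval vbl T hs = (\<lambda>p. T p (Suc (length (filter (\<lambda>B. p \<in> vbl B) hs))))"

definition valid_rule ::
  "'e set \<Rightarrow> ('e \<Rightarrow> ('v \<Rightarrow> 'val) \<Rightarrow> bool) \<Rightarrow> ('e list \<Rightarrow> ('v \<Rightarrow> 'val) \<Rightarrow> 'e) \<Rightarrow> bool"
  where "valid_rule Ev hap rule \<longleftrightarrow>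
     (\<forall>hs f. (\<exists>A\<in>Ev. hap A f) \<longrightarrow> rule hs f \<in> Ev \<and> hap (rule hs f) f)"

text \<open>run k = the events picked in the first k iterations (shorter if the algorithm stopped).\<close>
primrec run ::
  "'e set \<Rightarrow> ('e \<Rightarrow> 'v set) \<Rightarrow> ('e \<Rightarrow> ('v \<Rightarrow> 'val) \<Rightarrow> bool) \<Rightarrow> ('e list \<Rightarrow> ('v \<Rightarrow> 'val) \<Rightarrow> 'e)
    \<Rightarrow> ('v \<Rightarrow> nat \<Rightarrow> 'val) \<Rightarrow> nat \<Rightarrow> 'e list" where
  "run Ev vbl hap rule T 0 = []"
| "run Ev vbl hap rule T (Suc k) =
     (let hs = run Ev vbl hap rule T k; f = cur_eval vbl T hs in
      if \<exists>A\<in>Ev. hap A f then hs @ [rule hs f] else hs)"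

text \<open>Step t (t \<ge> 1) exists iff the algorithm performed at least t iterations; then
  C_T(t) is the last element of run t and C_T(1..t-1) = butlast (run t).\<close>
definition is_step where
  "is_step Ev vbl hap rule T t \<longleftrightarrow> 1 \<le> t \<and> length (run Ev vbl hap rule T t) = t"

text \<open>att P B k v v': v' arises from v by attaching a new leaf labelled B to a vertex
  at relative depth k whose label satisfies P.\<close>
inductive att :: "('e \<Rightarrow> bool) \<Rightarrow> 'e \<Rightarrow> nat \<Rightarrow> 'e wt \<Rightarrow> 'e wt \<Rightarrow> bool" for P B where
  here: "P A \<Longrightarrow> att P B 0 (WT A ch) (WT A (add_mset (WT B {#}) ch))"
| down: "c \<in># ch \<Longrightarrow> att P B k c c' \<Longrightarrow>
           att P B (Suc k) (WT A ch) (WT A (add_mset c' (ch - {#c#})))"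

text \<open>One step of the construction, processing event B = C(i) (ties broken arbitrarily,
  hence a relation).\<close>
definition build_step :: "'e set \<Rightarrow> ('e \<Rightarrow> 'v set) \<Rightarrow> 'e \<Rightarrow> ('v, 'e) pwt \<Rightarrow> ('v, 'e) pwt \<Rightarrow> bool"
  where "build_step Ev vbl B \<tau> \<tau>' \<longleftrightarrow>
    (let P = (\<lambda>L. B \<in> Gamma_plus Ev vbl L);
         Ds = {d. \<exists>c\<in>#snd \<tau>. \<exists>L. (d, L) \<in># verts c \<and> P L} in
     if Ds \<noteq> {} then
       fst \<tau>' = fst \<tau> \<and>
       (\<exists>c\<in>#snd \<tau>. \<exists>c'. att P B (Max Ds) c c' \<and> snd \<tau>' = add_mset c' (snd \<tau> - {#c#}))
     else if fst \<tau> \<inter> vbl B \<noteq> {} then \<tau>' = (fst \<tau>, add_mset (WT B {#}) (snd \<tau>))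
     else \<tau>' = \<tau>)"

inductive build_steps :: "'e set \<Rightarrow> ('e \<Rightarrow> 'v set) \<Rightarrow> ('v, 'e) pwt \<Rightarrow> 'e list \<Rightarrow> ('v, 'e) pwt \<Rightarrow> bool"
  for Ev vbl where
  nil: "build_steps Ev vbl \<tau> [] \<tau>"
| cons: "build_step Ev vbl B \<tau> \<tau>1 \<Longrightarrow> build_steps Ev vbl \<tau>1 bs \<tau>2 \<Longrightarrow> build_steps Ev vbl \<tau> (B # bs) \<tau>2"

text \<open>tau occurs in C_T: for some step t, S = root label of tau lies in B_{C(t)} and tau is
  a possible outcome of the construction of tau_C(t,S), processing C(t-1), ..., C(1).\<close>
definition occurs where
  "occurs Ev vbl hap rule T BT \<tau> \<longleftrightarrow>
     (\<exists>t. is_step Ev vbl hap rule T t \<and>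
        fst \<tau> \<in> blabels (BT (last (run Ev vbl hap rule T t))) \<and>
        build_steps Ev vbl (fst \<tau>, {#}) (rev (butlast (run Ev vbl hap rule T t))) \<tau>)"

primrec chk :: "('e \<Rightarrow> 'v set) \<Rightarrow> ('e \<Rightarrow> ('v \<Rightarrow> 'val) \<Rightarrow> bool) \<Rightarrow> ('v \<Rightarrow> nat \<Rightarrow> 'val)
     \<Rightarrow> (nat \<times> 'e) list \<Rightarrow> ('v \<Rightarrow> nat) \<Rightarrow> bool" where
  "chk vbl hap T [] used = True"
| "chk vbl hap T (x # xs) used \<longleftrightarrow>
     hap (snd x) (\<lambda>p. T p (Suc (used p))) \<and>
     chk vbl hap T xs (\<lambda>p. if p \<in> vbl (snd x) then Suc (used p) else used p)"

definition passes_check where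
  "passes_check vbl hap T \<tau> \<longleftrightarrow>
     (\<forall>xs. mset xs = pwt_verts \<tau> \<and> sorted_wrt (\<lambda>a b. fst b \<le> fst a) xs
        \<longrightarrow> chk vbl hap T xs (\<lambda>_. 0))"

end

theory Submission
  imports Defs
begin

text \<open>Read backwards, the construction of the tree attaches each new vertex strictly deeper
  than every vertex whose event shares a variable with it, and a vertex labelled B never gets a
  second child labelled B because B \<in> Gamma_plus B forces the later one further down; this gives
  properness. Consequently, within the tree, dependent events appear at decreasing depths in log
  order, and every earlier log step touching a variable of a vertex event is itself a vertex.
  Visiting by decreasing depth therefore reads, for each variable of an event, exactly the table
  entries the algorithm had used when it picked that event, and the event happened then.\<close>

lemma image_mset_sum_mset:
  "image_mset f (sum_mset M) = sum_mset (image_mset (image_mset f) M)"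
  by (induction M) auto

abbreviation deepen :: "(nat \<times> 'e) multiset \<Rightarrow> (nat \<times> 'e) multiset" where
  "deepen M \<equiv> image_mset (\<lambda>(d, B). (Suc d, B)) M"

lemma verts_WT: "verts (WT A ch) = add_mset (0, A) (deepen (sum_mset (image_mset verts ch)))"
  by (simp add: image_mset_sum_mset multiset.map_comp o_def)

lemma verts_top: "(0, wlab c) \<in># verts c"
  by (cases c) (simp add: verts_WT)

lemma verts_child: "(d, X) \<in># verts c \<Longrightarrow> c \<in># ch \<Longrightarrow> (Suc d, X) \<in># verts (WT A ch)"
  by (force simp: verts_WT dest: multi_member_split)

lemma att_verts: "att Pr B k c c' \<Longrightarrow> verts c' = add_mset (Suc k, B) (verts c)"
proof (induction rule: att.induct)
  case (here A ch)
  then show ?case by (simp add: verts_WT)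
next
  case (down c ch k c' A)
  then obtain ch0 where "ch = add_mset c ch0" by (metis multi_member_split)
  with down show ?case by (simp add: verts_WT)
qed

lemma att_wlab: "att Pr B k c c' \<Longrightarrow> wlab c' = wlab c"
  by (induction rule: att.induct) auto

lemma image_mset_wlab_replace:
  "c \<in># ch \<Longrightarrow> wlab c' = wlab c \<Longrightarrow> image_mset wlab (add_mset c' (ch - {#c#})) = image_mset wlab ch"
  by (auto dest: multi_member_split)

lemma att_wt_proper:
  "att Pr B k c c' \<Longrightarrow> wt_proper c \<Longrightarrow> Pr B \<Longrightarrow>
   \<forall>d X. (d, X) \<in># verts c \<longrightarrow> Pr X \<longrightarrow> d \<le> k \<Longrightarrow> wt_proper c'"
proof (induction rule: att.induct)
  case (here A ch)
  have "wlab c \<noteq> B" if "c \<in># ch" for c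
    using here verts_child[OF verts_top that, of A] by force
  then have "count (image_mset wlab ch) B = 0" by (auto simp: count_eq_zero_iff)
  with here show ?case by (auto simp: distinct_labels_def)
next
  case (down c ch k c' A)
  have "wt_proper c'"
    using down verts_child[OF _ down.hyps(1)] by fastforce
  moreover have "distinct_labels (add_mset c' (ch - {#c#}))"
    using down image_mset_wlab_replace[OF down.hyps(1) att_wlab[OF down.hyps(2)]]
    by (simp add: distinct_labels_def)
  ultimately show ?case using down.prems(1) by (auto dest: in_diffD)
qed

lemma in_pwt_verts_iff:
  "x \<in># pwt_verts \<tau> \<longleftrightarrow> (\<exists>c\<in>#snd \<tau>. \<exists>d X. x = (Suc d, X) \<and> (d, X) \<in># verts c)"
  by (force simp: pwt_verts_def in_Union_mset_iff)

lemma pwt_verts_add_mset: "pwt_verts (S, add_mset c M) = deepen (verts c) + pwt_verts (S, M)"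
  by (simp add: pwt_verts_def)

lemma pwt_verts_att:
  "c \<in># M \<Longrightarrow> att Pr B k c c' \<Longrightarrow>
   pwt_verts (S, add_mset c' (M - {#c#})) = add_mset (Suc (Suc k), B) (pwt_verts (S, M))"
  by (auto simp: pwt_verts_add_mset att_verts dest!: multi_member_split)

lemma finite_vertex_depths: "finite {d. \<exists>c\<in>#ch. \<exists>X. (d, X) \<in># verts c \<and> Q X}"
proof (rule finite_subset)
  show "{d. \<exists>c\<in>#ch. \<exists>X. (d, X) \<in># verts c \<and> Q X} \<subseteq> fst ` (\<Union>c\<in>set_mset ch. set_mset (verts c))"
    by force
qed simp

lemma build_step_cases:
  assumes "build_step Ev vbl B \<tau> \<tau>'"
  obtains (below) c c' k where "c \<in># snd \<tau>" "att (\<lambda>X. B \<in> Gamma_plus Ev vbl X) B k c c'"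
      "\<tau>' = (fst \<tau>, add_mset c' (snd \<tau> - {#c#}))"
      "\<forall>c\<in>#snd \<tau>. \<forall>d X. (d, X) \<in># verts c \<longrightarrow> B \<in> Gamma_plus Ev vbl X \<longrightarrow> d \<le> k"
  | (root) "\<forall>c\<in>#snd \<tau>. \<forall>d X. (d, X) \<in># verts c \<longrightarrow> B \<notin> Gamma_plus Ev vbl X"
      "\<tau>' = (fst \<tau>, add_mset (WT B {#}) (snd \<tau>))"
  | (unchanged) "\<forall>c\<in>#snd \<tau>. \<forall>d X. (d, X) \<in># verts c \<longrightarrow> B \<notin> Gamma_plus Ev vbl X" "\<tau>' = \<tau>"
proof -
  define Pr where "Pr = (\<lambda>X. B \<in> Gamma_plus Ev vbl X)"
  define Ds where "Ds = {d. \<exists>c\<in>#snd \<tau>. \<exists>X. (d, X) \<in># verts c \<and> Pr X}"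
  have step: "if Ds \<noteq> {} then fst \<tau>' = fst \<tau> \<and>
       (\<exists>c\<in>#snd \<tau>. \<exists>c'. att Pr B (Max Ds) c c' \<and> snd \<tau>' = add_mset c' (snd \<tau> - {#c#}))
     else if fst \<tau> \<inter> vbl B \<noteq> {} then \<tau>' = (fst \<tau>, add_mset (WT B {#}) (snd \<tau>))
     else \<tau>' = \<tau>"
    using assms unfolding build_step_def Let_def Pr_def Ds_def .
  show thesis
  proof (cases "Ds = {}")
    case False
    then obtain c c' where "c \<in># snd \<tau>" "att Pr B (Max Ds) c c'"
      "\<tau>' = (fst \<tau>, add_mset c' (snd \<tau> - {#c#}))"
      using step by (auto simp: prod_eq_iff)
    moreover have "finite Ds" unfolding Ds_def by (rule finite_vertex_depths)
    ultimately show thesis using below unfolding Pr_def Ds_def by (fastforce intro: Max_ge)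
  next
    case True
    then show thesis using step root unchanged unfolding Pr_def Ds_def by (auto split: if_splits)
  qed
qed

lemma Gamma_plus_self: "B \<in> Gamma_plus Ev vbl B"
  by (simp add: Gamma_plus_def)

lemma build_step_proper:
  assumes "build_step Ev vbl B \<tau> \<tau>'" and "proper \<tau>"
  shows "proper \<tau>'"
  using assms(1)
proof (cases rule: build_step_cases)
  case (below c c' k)
  have "wt_proper c'"
    using att_wt_proper[OF below(2) _ Gamma_plus_self] below(1,4) assms(2)
    unfolding proper_def by auto
  then show ?thesis
    using assms(2) below image_mset_wlab_replace[OF below(1) att_wlab[OF below(2)]]
    by (auto simp: proper_def distinct_labels_def dest: in_diffD)
next
  case root
  then have "count (image_mset wlab (snd \<tau>)) B = 0"
    using verts_top Gamma_plus_self by (fastforce simp: count_eq_zero_iff)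
  then show ?thesis using assms(2) root(2) by (auto simp: proper_def distinct_labels_def)
qed (use assms in simp)

lemma build_steps_proper: "build_steps Ev vbl \<tau> bs \<tau>' \<Longrightarrow> proper \<tau> \<Longrightarrow> proper \<tau>'"
  by (induction rule: build_steps.induct) (auto intro: build_step_proper)

lemma Gamma_plus_if_shared:
  "B \<in> Ev \<Longrightarrow> vbl X \<inter> vbl B \<noteq> {} \<Longrightarrow> B \<in> Gamma_plus Ev vbl X"
  by (auto simp: Gamma_plus_def Gamma_def)

lemma build_step_pwt_verts:
  assumes "build_step Ev vbl B \<tau> \<tau>'" and "B \<in> Ev"
  obtains (attached) d where "pwt_verts \<tau>' = add_mset (d, B) (pwt_verts \<tau>)"
      "\<forall>(e, X)\<in>#pwt_verts \<tau>. vbl X \<inter> vbl B \<noteq> {} \<longrightarrow> e < d"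
  | (unchanged) "pwt_verts \<tau>' = pwt_verts \<tau>"
      "\<forall>(e, X)\<in>#pwt_verts \<tau>. vbl X \<inter> vbl B = {}"
  using assms(1)
proof (cases rule: build_step_cases)
  case (below c c' k)
  have "pwt_verts \<tau>' = add_mset (Suc (Suc k), B) (pwt_verts \<tau>)"
    using pwt_verts_att[OF below(1,2), of "fst \<tau>"] below(3) by simp
  moreover have "\<forall>(e, X)\<in>#pwt_verts \<tau>. vbl X \<inter> vbl B \<noteq> {} \<longrightarrow> e < Suc (Suc k)"
    using below(4) Gamma_plus_if_shared[OF assms(2)] by (fastforce simp: in_pwt_verts_iff)
  ultimately show thesis by (rule attached)
next
  case root
  have "pwt_verts \<tau>' = add_mset (Suc 0, B) (pwt_verts \<tau>)"
    using root(2) by (simp add: pwt_verts_add_mset verts_WT)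
  moreover have "\<forall>(e, X)\<in>#pwt_verts \<tau>. vbl X \<inter> vbl B = {}"
    using root(1) Gamma_plus_if_shared[OF assms(2)] by (fastforce simp: in_pwt_verts_iff)
  ultimately show thesis by (intro attached) auto
next
  case unchanged
  then show thesis
    using that(2) Gamma_plus_if_shared[OF assms(2)] by (fastforce simp: in_pwt_verts_iff)
qed

text \<open>The multiset M of (depth, label) pairs is that of a tree built from the log entries
  L!k, ..., L!(length L - 1) (0-based: L!i is C(i+1)): its vertices are indexed by a set I of
  positions, the vertex of position i carrying label L!i and depth dep i.\<close>
definition log_indexed :: "('e \<Rightarrow> 'v set) \<Rightarrow> 'e list \<Rightarrow> nat \<Rightarrow> (nat \<times> 'e) multiset \<Rightarrow> bool" where
  "log_indexed vbl L k M \<longleftrightarrow> (\<exists>I dep. I \<subseteq> {k..<length L} \<and>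
     M = image_mset (\<lambda>i. (dep i, L ! i)) (mset_set I) \<and>
     (\<forall>i\<in>I. \<forall>j\<in>I. i < j \<longrightarrow> vbl (L ! i) \<inter> vbl (L ! j) \<noteq> {} \<longrightarrow> dep j < dep i) \<and>
     (\<forall>j\<in>I. \<forall>i. k \<le> i \<longrightarrow> i < j \<longrightarrow> vbl (L ! i) \<inter> vbl (L ! j) \<noteq> {} \<longrightarrow> i \<in> I))"

lemma log_indexed_empty: "log_indexed vbl L (length L) {#}"
  unfolding log_indexed_def by (intro exI[of _ "{}"]) simp

lemma log_indexed_insert:
  assumes "log_indexed vbl L (Suc k) M" and "k < length L"
    and deeper: "\<forall>(e, X)\<in>#M. vbl X \<inter> vbl (L ! k) \<noteq> {} \<longrightarrow> e < d"
  shows "log_indexed vbl L k (add_mset (d, L ! k) M)"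
proof -
  obtain I dep where I: "I \<subseteq> {Suc k..<length L}"
    and M: "M = image_mset (\<lambda>i. (dep i, L ! i)) (mset_set I)"
    and order: "\<forall>i\<in>I. \<forall>j\<in>I. i < j \<longrightarrow> vbl (L ! i) \<inter> vbl (L ! j) \<noteq> {} \<longrightarrow> dep j < dep i"
    and closed: "\<forall>j\<in>I. \<forall>i. Suc k \<le> i \<longrightarrow> i < j \<longrightarrow> vbl (L ! i) \<inter> vbl (L ! j) \<noteq> {} \<longrightarrow> i \<in> I"
    using assms(1) unfolding log_indexed_def by blast
  have fin: "finite I" and k_notin: "k \<notin> I" using I finite_subset by auto
  define dep' where "dep' = dep(k := d)"
  have "add_mset (d, L ! k) M = image_mset (\<lambda>i. (dep' i, L ! i)) (mset_set (insert k I))"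
    using fin k_notin unfolding M dep'_def by (auto intro!: image_mset_cong)
  moreover have "dep' j < dep' k" if "j \<in> I" "vbl (L ! k) \<inter> vbl (L ! j) \<noteq> {}" for j
    using deeper that fin k_notin unfolding M dep'_def by (force simp: inf_commute)
  moreover have "dep' j < dep' i"
    if "i \<in> I" "j \<in> I" "i < j" "vbl (L ! i) \<inter> vbl (L ! j) \<noteq> {}" for i j
    using order that k_notin by (auto simp: dep'_def)
  moreover have "i \<in> insert k I"
    if "j \<in> insert k I" "k \<le> i" "i < j" "vbl (L ! i) \<inter> vbl (L ! j) \<noteq> {}" for i j
    using closed that I by (cases "i = k") auto
  ultimately show ?thesis
    unfolding log_indexed_def using I assms(2)
    by (intro exI[of _ "insert k I"] exI[of _ dep'] conjI) auto
qed

lemma log_indexed_skip: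
  assumes "log_indexed vbl L (Suc k) M"
    and independent: "\<forall>(e, X)\<in>#M. vbl X \<inter> vbl (L ! k) = {}"
  shows "log_indexed vbl L k M"
proof -
  obtain I dep where I: "I \<subseteq> {Suc k..<length L}"
    and M: "M = image_mset (\<lambda>i. (dep i, L ! i)) (mset_set I)"
    and order: "\<forall>i\<in>I. \<forall>j\<in>I. i < j \<longrightarrow> vbl (L ! i) \<inter> vbl (L ! j) \<noteq> {} \<longrightarrow> dep j < dep i"
    and closed: "\<forall>j\<in>I. \<forall>i. Suc k \<le> i \<longrightarrow> i < j \<longrightarrow> vbl (L ! i) \<inter> vbl (L ! j) \<noteq> {} \<longrightarrow> i \<in> I"
    using assms(1) unfolding log_indexed_def by blast
  have "vbl (L ! k) \<inter> vbl (L ! j) = {}" if "j \<in> I" for j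
    using independent that I finite_subset[OF I] unfolding M by (force simp: inf_commute)
  then have "\<forall>j\<in>I. \<forall>i. k \<le> i \<longrightarrow> i < j \<longrightarrow> vbl (L ! i) \<inter> vbl (L ! j) \<noteq> {} \<longrightarrow> i \<in> I"
    using closed by (metis Suc_leI le_neq_implies_less)
  then show ?thesis
    unfolding log_indexed_def using I M order by (intro exI[of _ I] exI[of _ dep]) auto
qed

lemma build_step_log_indexed:
  assumes "build_step Ev vbl (L ! k) \<tau> \<tau>'" and "L ! k \<in> Ev" and "k < length L"
    and "log_indexed vbl L (Suc k) (pwt_verts \<tau>)"
  shows "log_indexed vbl L k (pwt_verts \<tau>')"
  using assms(1,2)
proof (cases rule: build_step_pwt_verts)
  case (attached d)
  then show ?thesis using log_indexed_insert[OF assms(4,3)] by simp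
next
  case unchanged
  then show ?thesis using log_indexed_skip[OF assms(4)] by simp
qed

lemma build_steps_log_indexed:
  assumes events: "\<forall>j<length L. L ! j \<in> Ev"
  shows "k \<le> length L \<Longrightarrow> build_steps Ev vbl \<tau> (rev (take k L)) \<tau>' \<Longrightarrow>
    log_indexed vbl L k (pwt_verts \<tau>) \<Longrightarrow> log_indexed vbl L 0 (pwt_verts \<tau>')"
proof (induction k arbitrary: \<tau>)
  case 0
  then show ?case by (auto elim: build_steps.cases)
next
  case (Suc k)
  have "rev (take (Suc k) L) = L ! k # rev (take k L)"
    using Suc.prems(1) by (simp add: take_Suc_conv_app_nth)
  then obtain \<tau>1 where step: "build_step Ev vbl (L ! k) \<tau> \<tau>1"
    and steps: "build_steps Ev vbl \<tau>1 (rev (take k L)) \<tau>'"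
    using Suc.prems(2) by (auto elim: build_steps.cases)
  have "k < length L" using Suc.prems(1) by simp
  then show ?case
    using Suc.IH[OF _ steps build_step_log_indexed[OF step]] Suc.prems(3) events by simp
qed

lemma chk_iff_nth:
  "chk vbl hap T xs used \<longleftrightarrow> (\<forall>m<length xs.
     hap (snd (xs ! m)) (\<lambda>p. T p (Suc (used p + length (filter (\<lambda>x. p \<in> vbl (snd x)) (take m xs))))))"
proof (induction xs arbitrary: used)
  case (Cons x xs)
  let ?used' = "\<lambda>p. if p \<in> vbl (snd x) then Suc (used p) else used p"
  have "(\<lambda>p. T p (Suc (used p + length (filter (\<lambda>x. p \<in> vbl (snd x)) (take (Suc m) (x # xs)))))) =
        (\<lambda>p. T p (Suc (?used' p + length (filter (\<lambda>x. p \<in> vbl (snd x)) (take m xs)))))" for m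
    by auto
  then show ?case using Cons.IH[of ?used'] by (simp add: All_less_Suc2)
qed simp

lemma mset_eq_image_msetE:
  assumes "mset xs = image_mset f M"
  obtains ys where "mset ys = M" "xs = map f ys"
proof -
  have "\<exists>ys. mset ys = M \<and> xs = map f ys"
    using assms
  proof (induction xs arbitrary: M)
    case (Cons x xs)
    then have "x \<in># image_mset f M" by (metis list.set_intros(1) set_mset_mset)
    then obtain y M0 where M: "M = add_mset y M0" and y: "f y = x"
      by (auto dest: multi_member_split)
    then have "mset xs = image_mset f M0" using Cons.prems by simp
    then obtain ys where "mset ys = M0" "xs = map f ys" using Cons.IH by blast
    then show ?case using M y by (intro exI[of _ "y # ys"]) auto
  qed simp
  then show thesis using that by blast
qed

text \<open>Here js lists log positions in a T-check visiting order; the two sides count the entries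
  of row p consumed before visiting js!m by the T-check and by the algorithm, respectively.\<close>
lemma earlier_visits_eq_earlier_positions:
  fixes js :: "nat list" and dep :: "nat \<Rightarrow> 'd::linorder" and V :: "nat \<Rightarrow> 'v set"
  assumes distinct: "distinct js"
    and sorted: "sorted_wrt (\<lambda>i j. dep j \<le> dep i) js"
    and order: "\<forall>i\<in>set js. \<forall>j\<in>set js. i < j \<longrightarrow> V i \<inter> V j \<noteq> {} \<longrightarrow> dep j < dep i"
    and closed: "\<forall>j\<in>set js. \<forall>i<j. V i \<inter> V j \<noteq> {} \<longrightarrow> i \<in> set js"
    and m: "m < length js" and p: "p \<in> V (js ! m)"
  shows "{i \<in> set (take m js). p \<in> V i} = {i. i < js ! m \<and> p \<in> V i}"
proof (intro equalityI subsetI)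
  fix i assume "i \<in> {i \<in> set (take m js). p \<in> V i}"
  then obtain m' where m': "m' < m" "i = js ! m'" and pi: "p \<in> V i"
    using m by (auto simp: in_set_conv_nth)
  have "i \<noteq> js ! m" using m' m distinct by (simp add: nth_eq_iff_index_eq)
  moreover have "dep (js ! m) \<le> dep i" using sorted m' m by (simp add: sorted_wrt_iff_nth_less)
  moreover have "dep i < dep (js ! m)" if "js ! m < i"
  proof -
    have "js ! m \<in> set js" "i \<in> set js" "V (js ! m) \<inter> V i \<noteq> {}"
      using m m' p pi by auto
    then show ?thesis using order that by blast
  qed
  ultimately have "i < js ! m" by (meson leD linorder_neqE_nat)
  with pi show "i \<in> {i. i < js ! m \<and> p \<in> V i}" by simp
next
  fix i assume "i \<in> {i. i < js ! m \<and> p \<in> V i}"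
  then have i: "i < js ! m" "p \<in> V i" by auto
  have shared: "V i \<inter> V (js ! m) \<noteq> {}" and jm: "js ! m \<in> set js" using i p m by auto
  then have "i \<in> set js" using closed i by blast
  then obtain m' where m': "m' < length js" "i = js ! m'" by (metis in_set_conv_nth)
  have "dep (js ! m) < dep i" using order i shared jm \<open>i \<in> set js\<close> by blast
  then have "m' < m"
    using sorted m m' i by (metis leD less_irrefl linorder_neqE_nat sorted_wrt_iff_nth_less)
  then show "i \<in> {i \<in> set (take m js). p \<in> V i}"
    using m' i by (auto simp: in_set_conv_nth intro!: exI[of _ m'])
qed

lemma length_filter_take_conv_card:
  "j \<le> length xs \<Longrightarrow> length (filter P (take j xs)) = card {i. i < j \<and> P (xs ! i)}"
  by (simp add: length_filter_conv_card) (metis (lifting) nth_take)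

lemma log_indexed_passes_check:
  assumes "log_indexed vbl L 0 (pwt_verts \<tau>)"
    and happens: "\<And>j g. j < length L \<Longrightarrow>
      \<forall>p\<in>vbl (L ! j). g p = length (filter (\<lambda>B. p \<in> vbl B) (take j L)) \<Longrightarrow>
      hap (L ! j) (\<lambda>p. T p (Suc (g p)))"
  shows "passes_check vbl hap T \<tau>"
  unfolding passes_check_def
proof (intro allI impI, elim conjE)
  obtain I dep where I: "I \<subseteq> {0..<length L}"
    and verts: "pwt_verts \<tau> = image_mset (\<lambda>i. (dep i, L ! i)) (mset_set I)"
    and order: "\<forall>i\<in>I. \<forall>j\<in>I. i < j \<longrightarrow> vbl (L ! i) \<inter> vbl (L ! j) \<noteq> {} \<longrightarrow> dep j < dep i"
    and closed: "\<forall>j\<in>I. \<forall>i. 0 \<le> i \<longrightarrow> i < j \<longrightarrow> vbl (L ! i) \<inter> vbl (L ! j) \<noteq> {} \<longrightarrow> i \<in> I"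
    using assms(1) unfolding log_indexed_def by (elim exE conjE) (rule that; simp)
  fix xs assume "mset xs = pwt_verts \<tau>" and sorted: "sorted_wrt (\<lambda>a b. fst b \<le> fst a) xs"
  then obtain js where js: "mset js = mset_set I" and xs: "xs = map (\<lambda>i. (dep i, L ! i)) js"
    using verts by (auto elim: mset_eq_image_msetE)
  have fin: "finite I" using I finite_subset by blast
  then have set_js: "set js = I" by (metis js finite_set_mset_mset_set set_mset_mset)
  have distinct: "distinct js"
    unfolding distinct_count_atmost_1 using js fin set_js by (simp add: count_mset_set)
  show "chk vbl hap T xs (\<lambda>_. 0)"
    unfolding chk_iff_nth
  proof (intro allI impI)
    fix m assume "m < length xs"
    then have m: "m < length js" using xs by simp
    then have j: "js ! m < length L" using I set_js nth_mem by fastforce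
    have "length (filter (\<lambda>x. p \<in> vbl (snd x)) (take m xs)) =
          length (filter (\<lambda>B. p \<in> vbl B) (take (js ! m) L))" if p: "p \<in> vbl (L ! (js ! m))" for p
    proof -
      have "{i \<in> set (take m js). p \<in> vbl (L ! i)} = {i. i < js ! m \<and> p \<in> vbl (L ! i)}"
        using earlier_visits_eq_earlier_positions[where V = "\<lambda>i. vbl (L ! i)", OF distinct _ _ _ m p] sorted order closed
        by (simp add: xs set_js sorted_wrt_map)
      then show ?thesis
        using distinct_card[of "filter (\<lambda>i. p \<in> vbl (L ! i)) (take m js)"] distinct j
        by (simp add: xs take_map filter_map o_def length_filter_take_conv_card)
    qed
    then show "hap (snd (xs ! m)) (\<lambda>p. T p (Suc (0 + length (filter (\<lambda>x. p \<in> vbl (snd x)) (take m xs)))))"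
      using happens[OF j] m by (simp add: xs)
  qed
qed

lemma run_Suc_cases:
  "run Ev vbl hap rule T (Suc k) = run Ev vbl hap rule T k \<or>
   run Ev vbl hap rule T (Suc k) = run Ev vbl hap rule T k @
     [rule (run Ev vbl hap rule T k) (cur_eval vbl T (run Ev vbl hap rule T k))]"
  by (simp add: Let_def)

lemma run_length_le: "length (run Ev vbl hap rule T k) \<le> k"
  by (induction k) (auto simp: Let_def)

lemma run_prefix: "k \<le> m \<Longrightarrow> \<exists>zs. run Ev vbl hap rule T m = run Ev vbl hap rule T k @ zs"
proof (induction m)
  case (Suc m)
  show ?case
  proof (cases "k = Suc m")
    case False
    then obtain zs where "run Ev vbl hap rule T m = run Ev vbl hap rule T k @ zs"
      using Suc by force
    then show ?thesis using run_Suc_cases[of Ev vbl hap rule T m] by (metis append.assoc)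
  qed simp
qed simp

lemma run_length_below:
  "length (run Ev vbl hap rule T m) = m \<Longrightarrow> k \<le> m \<Longrightarrow> length (run Ev vbl hap rule T k) = k"
proof (induction m)
  case (Suc m)
  have "length (run Ev vbl hap rule T m) = m"
    using run_Suc_cases[of Ev vbl hap rule T m] run_length_le[of Ev vbl hap rule T m] Suc.prems(1)
    by (auto simp del: run.simps)
  then show ?case using Suc.IH Suc.prems by (cases "k = Suc m") (auto simp: le_Suc_eq simp del: run.simps)
qed simp

lemma run_nth_picked:
  assumes rule: "valid_rule Ev hap rule" and len: "length (run Ev vbl hap rule T t) = t" and "j < t"
  shows "run Ev vbl hap rule T t ! j \<in> Ev \<and>
    hap (run Ev vbl hap rule T t ! j) (cur_eval vbl T (take j (run Ev vbl hap rule T t)))"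
proof -
  let ?r = "run Ev vbl hap rule T"
  let ?f = "cur_eval vbl T (?r j)"
  have len_j: "length (?r j) = j" and len_Suc_j: "length (?r (Suc j)) = Suc j"
    using run_length_below[OF len, of j] run_length_below[OF len, of "Suc j"] \<open>j < t\<close>
    by (simp_all del: run.simps)
  then have some: "\<exists>A\<in>Ev. hap A ?f"
    by (auto simp: Let_def split: if_splits)
  obtain ws where "?r t = ?r (Suc j) @ ws"
    using run_prefix[OF Suc_leI[OF \<open>j < t\<close>]] by blast
  then have "?r t = ?r j @ rule (?r j) ?f # ws"
    using some by (simp add: Let_def)
  then have "take j (?r t) = ?r j" "?r t ! j = rule (?r j) ?f"
    using len_j by (simp_all add: nth_append)
  then show ?thesis using rule some unfolding valid_rule_def by simp
qed

lemma hap_if_pointers_agree: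
  assumes "setting P Ev D vbl hap" and "valid_table P D T" and "A \<in> Ev"
    and "hap A (\<lambda>p. T p (Suc (f p)))" and "\<forall>p\<in>vbl A. g p = f p"
  shows "hap A (\<lambda>p. T p (Suc (g p)))"
proof -
  have "determines P D hap A (vbl A)" using assms(1,3) unfolding setting_def by blast
  moreover have "\<forall>p\<in>P. T p (Suc (h p)) \<in> D p" for h
    using assms(2) unfolding valid_table_def by simp
  ultimately have "hap A (\<lambda>p. T p (Suc (f p))) \<longleftrightarrow> hap A (\<lambda>p. T p (Suc (g p)))"
    using assms(5) unfolding determines_def by (metis (no_types, lifting))
  then show ?thesis using assms(4) by blast
qed

lemma event_log_nth:
  assumes "setting P Ev D vbl hap" and "valid_table P D T" and "valid_rule Ev hap rule"
    and "is_step Ev vbl hap rule T t" and L: "L = butlast (run Ev vbl hap rule T t)"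
    and j: "j < length L"
  shows "L ! j \<in> Ev"
    and "\<forall>p\<in>vbl (L ! j). g p = length (filter (\<lambda>B. p \<in> vbl B) (take j L)) \<Longrightarrow>
      hap (L ! j) (\<lambda>p. T p (Suc (g p)))"
proof -
  have picked: "L ! j \<in> Ev \<and> hap (L ! j) (cur_eval vbl T (take j L))"
    using run_nth_picked[OF assms(3), of vbl T t j] assms(4) j
    by (simp add: is_step_def L nth_butlast take_butlast)
  then show "L ! j \<in> Ev" ..
  show "hap (L ! j) (\<lambda>p. T p (Suc (g p)))"
    if "\<forall>p\<in>vbl (L ! j). g p = length (filter (\<lambda>B. p \<in> vbl B) (take j L))"
    using hap_if_pointers_agree[OF assms(1,2) _ _ that] picked by (simp add: cur_eval_def)
qed

theorem lemma3p1:
  fixes P :: "'v set" and Ev :: "'e set" and D :: "'v \<Rightarrow> 'val set"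
    and vbl :: "'e \<Rightarrow> 'v set" and hap :: "'e \<Rightarrow> ('v \<Rightarrow> 'val) \<Rightarrow> bool"
    and BT :: "'e \<Rightarrow> 'v btree" and T :: "'v \<Rightarrow> nat \<Rightarrow> 'val"
    and rule :: "'e list \<Rightarrow> ('v \<Rightarrow> 'val) \<Rightarrow> 'e"
    and \<tau> :: "('v, 'e) pwt"
  assumes "setting P Ev D vbl hap"
    and "valid_btrees Ev vbl BT"
    and "valid_table P D T"
    and "valid_rule Ev hap rule"
    and "is_pwt Ev vbl BT \<tau>"
    and "occurs Ev vbl hap rule T BT \<tau>"
  shows "proper \<tau> \<and> passes_check vbl hap T \<tau>"
proof -
  obtain t where step: "is_step Ev vbl hap rule T t"
    and built: "build_steps Ev vbl (fst \<tau>, {#}) (rev (butlast (run Ev vbl hap rule T t))) \<tau>"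
    using assms(6) unfolding occurs_def by blast
  define L where "L = butlast (run Ev vbl hap rule T t)"
  note event_log = event_log_nth[OF assms(1,3,4) step L_def]
  have "proper \<tau>"
    using build_steps_proper[OF built] by (simp add: proper_def distinct_labels_def)
  moreover have "log_indexed vbl L 0 (pwt_verts \<tau>)"
  proof (rule build_steps_log_indexed)
    show "build_steps Ev vbl (fst \<tau>, {#}) (rev (take (length L) L)) \<tau>"
      using built by (simp add: L_def)
  qed (use event_log(1) log_indexed_empty in \<open>auto simp: pwt_verts_def\<close>)
  then have "passes_check vbl hap T \<tau>"
    using event_log(2) by (rule log_indexed_passes_check)
  ultimately show ?thesis ..
qed

end
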